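(* Let $n\ge 2$, $F_2=\langle a,b\rangle$ free, $T=[a,b]$, and $R=R_{\mathrm{Heis}_n}$ the kernel of $F_2\to H_n$, $a\mapsto\alpha$, $b\mapsto\beta$. Then for all integers $i,j\ge 0$ the elements $T^n$ and $T^{-n}[a^ib^j,T]$ lie in $R$, and in the abelianization $R^{ab}=R/[R,R]$ (written additively, with the $H_n$-action described in the context) one has $$T^n=a^n-(a^n)^{\beta}-\sum_{k=0}^{n-2}\sum_{i=0}^{n-2-k}[a,T]^{\tau^k\alpha^i},$$ $$T^{-n}=b^n-(b^n)^{\alpha}-\sum_{k=0}^{n-2}\sum_{j=0}^{n-2-k}[b,T^{-1}]^{\tau^{-k}\beta^j},$$ $$[a^ib^j,T]=[b,T]^{\alpha^i\sum_{\lambda=0}^{j-1}\beta^\lambda}+[a,T]^{\sum_{\lambda=0}^{i-1}\alpha^\lambda}.$$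
   Context: $H_n$ is the group of $3\times3$ upper unitriangular matrices over $\mathbb{Z}/n\mathbb{Z}$, generated by $\alpha$ (entry $1$ at position $(1,2)$) and $\beta$ (entry $1$ at position $(2,3)$); $\tau=[\alpha,\beta]$. Commutator $[x,y]=xyx^{-1}y^{-1}$. Elements of $R$ are identified with their classes in $R^{ab}$. Since $R$ is normal in $F_2$ with $F_2/R\cong H_n$, $H_n$ acts on $R^{ab}$: for $x\in R^{ab}$ and $g\in H_n$, $x^g$ is the class of $\tilde g x\tilde g^{-1}$ for any lift $\tilde g\in F_2$ of $g$ (so $x^{gh}=(x^h)^g$); this is extended $\mathbb{Z}$-linearly to $\mathbb{Z}[H_n]$ by $x^{\sum c_g g}=\sum c_g x^g$. Here $\alpha,\beta,\tau$ are the images of $a,b,T$. *)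

theory Defs
  imports "HOL-Algebra.Algebra"
begin

text \<open>A letter is (g, e): g = False means a, g = True means b; e = True means inverse.\<close>
type_synonym letter = "bool \<times> bool"

definition inv_letter :: "letter \<Rightarrow> letter" where
  "inv_letter l = (fst l, \<not> snd l)"

definition reduced :: "letter list \<Rightarrow> bool" where
  "reduced w \<longleftrightarrow> (\<forall>i. Suc i < length w \<longrightarrow> w ! Suc i \<noteq> inv_letter (w ! i))"

fun cancel1 :: "letter \<Rightarrow> letter list \<Rightarrow> letter list" where
  "cancel1 x [] = [x]"
| "cancel1 x (y # ys) = (if y = inv_letter x then ys else x # y # ys)"

definition F2 :: "letter list monoid" where
  "F2 = \<lparr> carrier = {w. reduced w}, monoid.mult = (\<lambda>u v. foldr cancel1 u v), one = [] \<rparr>"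

definition gen_a :: "letter list" where "gen_a = [(False, False)]"
definition gen_b :: "letter list" where "gen_b = [(True, False)]"

definition comm :: "letter list \<Rightarrow> letter list \<Rightarrow> letter list" where
  "comm x y = x \<otimes>\<^bsub>F2\<^esub> y \<otimes>\<^bsub>F2\<^esub> inv\<^bsub>F2\<^esub> x \<otimes>\<^bsub>F2\<^esub> inv\<^bsub>F2\<^esub> y"

definition gen_T :: "letter list" where "gen_T = comm gen_a gen_b"

abbreviation fpow :: "letter list \<Rightarrow> int \<Rightarrow> letter list" where
  "fpow x k \<equiv> x [^]\<^bsub>F2\<^esub> k"

text \<open>(x, y, z) represents the matrix [[1,x,z],[0,1,y],[0,0,1]] with entries in {0..<n}.\<close>
definition Heis :: "int \<Rightarrow> (int \<times> int \<times> int) monoid" where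
  "Heis n = \<lparr> carrier = {(x, y, z). x \<in> {0..<n} \<and> y \<in> {0..<n} \<and> z \<in> {0..<n}},
     monoid.mult = (\<lambda>(x, y, z) (x', y', z'). ((x + x') mod n, (y + y') mod n, (z + z' + x * y') mod n)),
     one = (0, 0, 0) \<rparr>"

definition letter_val :: "int \<Rightarrow> letter \<Rightarrow> int \<times> int \<times> int" where
  "letter_val n l = (if fst l then (0, (if snd l then -1 else 1) mod n, 0)
                     else ((if snd l then -1 else 1) mod n, 0, 0))"

definition hval :: "int \<Rightarrow> letter list \<Rightarrow> int \<times> int \<times> int" where
  "hval n w = foldr (\<lambda>l acc. letter_val n l \<otimes>\<^bsub>Heis n\<^esub> acc) w \<one>\<^bsub>Heis n\<^esub>"

definition Rel :: "int \<Rightarrow> letter list set" where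
  "Rel n = kernel F2 (Heis n) (hval n)"

definition Rab :: "int \<Rightarrow> letter list set monoid" where
  "Rab n = (F2\<lparr>carrier := Rel n\<rparr>) Mod (derived F2 (Rel n))"

definition cls :: "int \<Rightarrow> letter list \<Rightarrow> letter list set" where
  "cls n x = derived F2 (Rel n) #>\<^bsub>F2\<^esub> x"

text \<open>x^g for x in R and g a lift in F_2 of an element of H_n: class of g x g^{-1}\<close>
definition act :: "int \<Rightarrow> letter list \<Rightarrow> letter list \<Rightarrow> letter list set" where
  "act n g x = cls n (g \<otimes>\<^bsub>F2\<^esub> x \<otimes>\<^bsub>F2\<^esub> inv\<^bsub>F2\<^esub> g)"

definition rsum :: "int \<Rightarrow> letter list set list \<Rightarrow> letter list set" where
  "rsum n xs = foldr (\<lambda>x acc. x \<otimes>\<^bsub>Rab n\<^esub> acc) xs \<one>\<^bsub>Rab n\<^esub>"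

end

theory Submission
  imports Defs
begin

text \<open>All three formulas hold in the abelianization R/[R,R] of any normal subgroup R of a
  group G, with G acting by conjugation, as soon as t = [x,y] is central modulo R; for the kernel
  R of F_2 -> H_n this holds because tau is central in H_n. The identity
  [g h, t] = g [h,t] g^-1 [g,t] gives [x^m, t] = sum_{i<m} [x,t]^(x^i), and with it the formula
  for [x^i y^j, t]. For t^n, conjugation by y turns x^n into (t^-1 x)^n; the defect
  W_m = t^m (t^-1 x)^m x^-m satisfies W_{m+1} = t W_m t^-1 [x^m, t]^-1, so it lies in R and its
  class is minus the triangular sum of the [x,t]^(t^k x^i). The formula for T^-n is the one for
  T^n applied to T^-1 = [b,a].\<close>

section \<open>The abelianization of a normal subgroup\<close>

definition commutator :: "('a, 'b) monoid_scheme \<Rightarrow> 'a \<Rightarrow> 'a \<Rightarrow> 'a" where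
  "commutator G x y = x \<otimes>\<^bsub>G\<^esub> y \<otimes>\<^bsub>G\<^esub> inv\<^bsub>G\<^esub> x \<otimes>\<^bsub>G\<^esub> inv\<^bsub>G\<^esub> y"

lemma (in group) commutator_closed [simp]:
  "x \<in> carrier G \<Longrightarrow> y \<in> carrier G \<Longrightarrow> commutator G x y \<in> carrier G"
  by (simp add: commutator_def)

lemma (in group) commutator_eq_one:
  "x \<in> carrier G \<Longrightarrow> y \<in> carrier G \<Longrightarrow> x \<otimes> y = y \<otimes> x \<Longrightarrow> commutator G x y = \<one>"
  by (simp add: commutator_def m_assoc)

lemma (in group_hom) hom_commutator:
  "x \<in> carrier G \<Longrightarrow> y \<in> carrier G \<Longrightarrow> h (commutator G x y) = commutator H (h x) (h y)"
  by (simp add: commutator_def)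

lemma (in group) inv_mult_cancel_left [simp]:
  "x \<in> carrier G \<Longrightarrow> y \<in> carrier G \<Longrightarrow> inv x \<otimes> (x \<otimes> y) = y"
  by (simp add: m_assoc [symmetric])

lemma (in group) mult_inv_cancel_left [simp]:
  "x \<in> carrier G \<Longrightarrow> y \<in> carrier G \<Longrightarrow> x \<otimes> (inv x \<otimes> y) = y"
  by (simp add: m_assoc [symmetric])

lemma (in group) conj_nat_pow:
  "g \<in> carrier G \<Longrightarrow> x \<in> carrier G \<Longrightarrow> g \<otimes> x [^] (m::nat) \<otimes> inv g = (g \<otimes> x \<otimes> inv g) [^] m"
proof (induction m)
  case (Suc m)
  have "g \<otimes> x [^] Suc m \<otimes> inv g = (g \<otimes> x [^] m \<otimes> inv g) \<otimes> (g \<otimes> x \<otimes> inv g)"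
    using Suc.prems by (simp add: m_assoc)
  then show ?case using Suc by simp
qed simp

lemma (in comm_group) cancel_inv_inv_mult:
  "a \<in> carrier G \<Longrightarrow> b \<in> carrier G \<Longrightarrow> c \<in> carrier G \<Longrightarrow> c \<otimes> inv (inv a \<otimes> inv b \<otimes> c) \<otimes> inv b = a"
  by (simp add: inv_mult m_ac)

locale normal_abelianization = normal R G for R and G (structure)
begin

definition R_ab :: "'a set monoid" where
  "R_ab = (G\<lparr>carrier := R\<rparr>) Mod (derived G R)"

definition ab_cls :: "'a \<Rightarrow> 'a set" where
  "ab_cls x = derived G R #> x"

definition ab_conj :: "'a \<Rightarrow> 'a set \<Rightarrow> 'a set" where
  "ab_conj g U = (\<lambda>x. g \<otimes> x \<otimes> inv g) ` U"

definition ab_sum :: "'a set list \<Rightarrow> 'a set" where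
  "ab_sum xs = foldr (\<lambda>x acc. x \<otimes>\<^bsub>R_ab\<^esub> acc) xs \<one>\<^bsub>R_ab\<^esub>"

lemma derived_normal: "derived G R \<lhd> G"
  by (rule derived_is_normal) (rule normal_axioms)

lemma derived_normal_in_R: "derived G R \<lhd> G\<lparr>carrier := R\<rparr>"
  by (rule derived_subgroup_is_normal) (rule subgroup_axioms)

lemma commutator_in_derived: "r \<in> R \<Longrightarrow> s \<in> R \<Longrightarrow> commutator G r s \<in> derived G R"
  unfolding derived_def commutator_def by (rule generate.incl) blast

lemma ab_cls_hom: "group_hom (G\<lparr>carrier := R\<rparr>) R_ab ab_cls"
proof -
  have "r_coset (G\<lparr>carrier := R\<rparr>) = r_coset G"
    by (simp add: r_coset_def[abs_def])
  then show ?thesis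
    using normal.r_coset_hom_Mod[OF derived_normal_in_R] normal.factorgroup_is_group[OF derived_normal_in_R]
      subgroup_imp_group[OF subgroup_axioms]
    by (simp add: group_hom_def group_hom_axioms_def R_ab_def ab_cls_def[abs_def])
qed

lemma group_R_ab: "group R_ab"
  using ab_cls_hom by (simp add: group_hom_def group_hom_axioms_def)

lemma ab_cls_closed: "r \<in> R \<Longrightarrow> ab_cls r \<in> carrier R_ab"
  using group_hom.hom_closed[OF ab_cls_hom] by simp

lemma ab_cls_mult: "r \<in> R \<Longrightarrow> s \<in> R \<Longrightarrow> ab_cls (r \<otimes> s) = ab_cls r \<otimes>\<^bsub>R_ab\<^esub> ab_cls s"
  using group_hom.hom_mult[OF ab_cls_hom] by simp

lemma ab_cls_inv: "r \<in> R \<Longrightarrow> ab_cls (inv r) = inv\<^bsub>R_ab\<^esub> ab_cls r"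
  using group_hom.hom_inv[OF ab_cls_hom] m_inv_consistent[OF subgroup_axioms] by simp

lemma ab_cls_one: "ab_cls \<one> = \<one>\<^bsub>R_ab\<^esub>"
  using group_hom.hom_one[OF ab_cls_hom] by simp

lemma R_ab_carrier: "carrier R_ab = ab_cls ` R"
  by (auto simp: R_ab_def ab_cls_def FactGroup_def RCOSETS_def r_coset_def)

lemma ab_cls_eqI:
  assumes "x \<in> carrier G" "y \<in> carrier G" "x \<otimes> inv y \<in> derived G R"
  shows "ab_cls x = ab_cls y"
proof -
  have "subgroup (derived G R) G" using derived_normal by (rule normal_imp_subgroup)
  then show ?thesis
    using assms repr_independence subgroup.rcos_module_rev[OF _ is_group]
    unfolding ab_cls_def by metis
qed

lemma R_ab_comm_group: "comm_group R_ab"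
proof (rule group.group_comm_groupI[OF group_R_ab])
  fix U V assume "U \<in> carrier R_ab" "V \<in> carrier R_ab"
  then obtain r s where rs: "r \<in> R" "s \<in> R" and UV: "U = ab_cls r" "V = ab_cls s"
    by (auto simp: R_ab_carrier)
  have "r \<otimes> s \<otimes> inv (s \<otimes> r) = commutator G r s"
    using rs by (simp add: commutator_def inv_mult_group m_assoc)
  then have "ab_cls (r \<otimes> s) = ab_cls (s \<otimes> r)"
    using rs commutator_in_derived by (intro ab_cls_eqI) auto
  then show "U \<otimes>\<^bsub>R_ab\<^esub> V = V \<otimes>\<^bsub>R_ab\<^esub> U"
    using rs by (simp add: UV ab_cls_mult)
qed

end

sublocale normal_abelianization \<subseteq> R_ab: comm_group R_ab
  by (rule R_ab_comm_group)

context normal_abelianization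
begin

lemma ab_conj_ab_cls:
  assumes g: "g \<in> carrier G" and x: "x \<in> carrier G"
  shows "ab_conj g (ab_cls x) = ab_cls (g \<otimes> x \<otimes> inv g)"
proof -
  interpret derived: normal "derived G R" G by (rule derived_normal)
  have gxg: "g \<otimes> x \<otimes> inv g \<in> carrier G" using g x by simp
  show ?thesis
    unfolding ab_conj_def ab_cls_def
  proof
    show "(\<lambda>y. g \<otimes> y \<otimes> inv g) ` (derived G R #> x) \<subseteq> derived G R #> (g \<otimes> x \<otimes> inv g)"
    proof (rule image_subsetI)
      fix y assume "y \<in> derived G R #> x"
      then obtain d where d: "d \<in> derived G R" "y = d \<otimes> x" unfolding r_coset_def by blast
      then have "g \<otimes> y \<otimes> inv g = (g \<otimes> d \<otimes> inv g) \<otimes> (g \<otimes> x \<otimes> inv g)"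
        using g x by (simp add: m_assoc)
      then show "g \<otimes> y \<otimes> inv g \<in> derived G R #> (g \<otimes> x \<otimes> inv g)"
        using derived.inv_op_closed2[OF g d(1)] gxg by (simp add: rcosI[OF _ derived.subset])
    qed
  next
    show "derived G R #> (g \<otimes> x \<otimes> inv g) \<subseteq> (\<lambda>y. g \<otimes> y \<otimes> inv g) ` (derived G R #> x)"
    proof
      fix z assume "z \<in> derived G R #> (g \<otimes> x \<otimes> inv g)"
      then obtain d where d: "d \<in> derived G R" "z = d \<otimes> (g \<otimes> x \<otimes> inv g)" unfolding r_coset_def by blast
      then have "z = g \<otimes> ((inv g \<otimes> d \<otimes> g) \<otimes> x) \<otimes> inv g"
        using g x by (simp add: m_assoc)
      moreover have "(inv g \<otimes> d \<otimes> g) \<otimes> x \<in> derived G R #> x"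
        using derived.inv_op_closed1[OF g d(1)] x by (simp add: rcosI[OF _ derived.subset])
      ultimately show "z \<in> (\<lambda>y. g \<otimes> y \<otimes> inv g) ` (derived G R #> x)" by blast
    qed
  qed
qed

lemma ab_conj_closed:
  assumes "g \<in> carrier G" "U \<in> carrier R_ab"
  shows "ab_conj g U \<in> carrier R_ab"
  using assms inv_op_closed2 by (auto simp: R_ab_carrier ab_conj_ab_cls)

lemma ab_conj_mult:
  assumes g: "g \<in> carrier G" and U: "U \<in> carrier R_ab" and V: "V \<in> carrier R_ab"
  shows "ab_conj g (U \<otimes>\<^bsub>R_ab\<^esub> V) = ab_conj g U \<otimes>\<^bsub>R_ab\<^esub> ab_conj g V"
proof -
  obtain r s where rs: "r \<in> R" "s \<in> R" and UV: "U = ab_cls r" "V = ab_cls s"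
    using U V by (auto simp: R_ab_carrier)
  have "ab_conj g (U \<otimes>\<^bsub>R_ab\<^esub> V) = ab_cls (g \<otimes> (r \<otimes> s) \<otimes> inv g)"
    using g rs by (simp add: UV ab_cls_mult [symmetric] ab_conj_ab_cls)
  also have "\<dots> = ab_cls ((g \<otimes> r \<otimes> inv g) \<otimes> (g \<otimes> s \<otimes> inv g))"
    using g rs by (simp add: m_assoc)
  also have "\<dots> = ab_conj g U \<otimes>\<^bsub>R_ab\<^esub> ab_conj g V"
    using g rs inv_op_closed2 by (simp add: UV ab_cls_mult ab_conj_ab_cls)
  finally show ?thesis .
qed

lemma ab_conj_inv:
  assumes g: "g \<in> carrier G" and U: "U \<in> carrier R_ab"
  shows "ab_conj g (inv\<^bsub>R_ab\<^esub> U) = inv\<^bsub>R_ab\<^esub> ab_conj g U"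
proof -
  obtain r where r: "r \<in> R" "U = ab_cls r"
    using U by (auto simp: R_ab_carrier)
  have "g \<otimes> inv r \<otimes> inv g = inv (g \<otimes> r \<otimes> inv g)"
    using g r by (simp add: m_assoc inv_mult_group)
  then show ?thesis
    using g r inv_op_closed2 by (simp add: ab_cls_inv [symmetric] ab_conj_ab_cls)
qed

lemma ab_conj_mult_left:
  assumes g: "g \<in> carrier G" and h: "h \<in> carrier G" and U: "U \<in> carrier R_ab"
  shows "ab_conj (g \<otimes> h) U = ab_conj g (ab_conj h U)"
proof -
  obtain r where r: "r \<in> R" "U = ab_cls r"
    using U by (auto simp: R_ab_carrier)
  have "g \<otimes> h \<otimes> r \<otimes> inv (g \<otimes> h) = g \<otimes> (h \<otimes> r \<otimes> inv h) \<otimes> inv g"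
    using g h r by (simp add: m_assoc inv_mult_group)
  then show ?thesis
    using g h r by (simp add: ab_conj_ab_cls)
qed

lemma ab_conj_one: "g \<in> carrier G \<Longrightarrow> ab_conj g \<one>\<^bsub>R_ab\<^esub> = \<one>\<^bsub>R_ab\<^esub>"
  by (simp add: ab_cls_one [symmetric] ab_conj_ab_cls)

lemma ab_sum_Nil [simp]: "ab_sum [] = \<one>\<^bsub>R_ab\<^esub>"
  by (simp add: ab_sum_def)

lemma ab_sum_Cons [simp]: "ab_sum (U # Us) = U \<otimes>\<^bsub>R_ab\<^esub> ab_sum Us"
  by (simp add: ab_sum_def)

lemma ab_sum_closed: "set Us \<subseteq> carrier R_ab \<Longrightarrow> ab_sum Us \<in> carrier R_ab"
  by (induction Us) auto

lemma ab_sum_append: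
  "set Us \<subseteq> carrier R_ab \<Longrightarrow> set Vs \<subseteq> carrier R_ab \<Longrightarrow>
    ab_sum (Us @ Vs) = ab_sum Us \<otimes>\<^bsub>R_ab\<^esub> ab_sum Vs"
  by (induction Us) (auto simp: ab_sum_closed R_ab.m_assoc)

lemma ab_conj_ab_sum:
  "g \<in> carrier G \<Longrightarrow> set Us \<subseteq> carrier R_ab \<Longrightarrow> ab_conj g (ab_sum Us) = ab_sum (map (ab_conj g) Us)"
  by (induction Us) (auto simp: ab_conj_mult ab_sum_closed ab_conj_one)

end

section \<open>Elements central modulo a normal subgroup\<close>

locale central_mod = normal_abelianization +
  fixes t
  assumes t_closed [simp]: "t \<in> carrier G"
    and commutator_t_in: "g \<in> carrier G \<Longrightarrow> commutator G g t \<in> R"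
begin

lemma central_mod_inv: "central_mod R G (inv t)"
proof
  fix g assume g: "g \<in> carrier G"
  have "commutator G g (inv t) = inv t \<otimes> inv (commutator G g t) \<otimes> t"
    using g by (simp add: commutator_def m_assoc inv_mult_group)
  then show "commutator G g (inv t) \<in> R"
    using g commutator_t_in inv_op_closed1 by simp
qed simp

lemma ab_cls_commutator_mult_left:
  assumes g: "g \<in> carrier G" and h: "h \<in> carrier G"
  shows "ab_cls (commutator G (g \<otimes> h) t)
    = ab_conj g (ab_cls (commutator G h t)) \<otimes>\<^bsub>R_ab\<^esub> ab_cls (commutator G g t)"
proof -
  have "commutator G (g \<otimes> h) t = (g \<otimes> commutator G h t \<otimes> inv g) \<otimes> commutator G g t"
    using g h by (simp add: commutator_def m_assoc inv_mult_group)
  then show ?thesis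
    using g h commutator_t_in inv_op_closed2 by (simp add: ab_cls_mult ab_conj_ab_cls)
qed

lemma ab_cls_commutator_pow_left:
  assumes z: "z \<in> carrier G"
  shows "ab_cls (commutator G (z [^] (m::nat)) t)
    = ab_sum [ab_conj (z [^] i) (ab_cls (commutator G z t)). i \<leftarrow> [0..<m]]"
proof (induction m)
  case 0
  then show ?case by (simp add: commutator_def ab_cls_one)
next
  case (Suc m)
  have closed: "ab_conj (z [^] i) (ab_cls (commutator G z t)) \<in> carrier R_ab" for i :: nat
    using z commutator_t_in by (simp add: ab_conj_closed ab_cls_closed)
  have "ab_cls (commutator G (z [^] Suc m) t)
      = ab_conj (z [^] m) (ab_cls (commutator G z t)) \<otimes>\<^bsub>R_ab\<^esub> ab_cls (commutator G (z [^] m) t)"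
    using z by (simp add: ab_cls_commutator_mult_left)
  then show ?case
    using Suc closed by (simp add: ab_sum_append ab_sum_closed image_subset_iff R_ab.m_comm)
qed

lemma ab_cls_commutator_pow_mult_pow_left:
  assumes x: "x \<in> carrier G" and y: "y \<in> carrier G"
  shows "ab_cls (commutator G (x [^] (i::nat) \<otimes> y [^] (j::nat)) t)
    = ab_sum [ab_conj (x [^] i \<otimes> y [^] l) (ab_cls (commutator G y t)). l \<leftarrow> [0..<j]]
      \<otimes>\<^bsub>R_ab\<^esub> ab_sum [ab_conj (x [^] l) (ab_cls (commutator G x t)). l \<leftarrow> [0..<i]]"
proof -
  have closed: "set [ab_conj (y [^] l) (ab_cls (commutator G y t)). l \<leftarrow> [0..<j]] \<subseteq> carrier R_ab"
    using y commutator_t_in by (auto simp: ab_conj_closed ab_cls_closed)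
  have "ab_conj (x [^] i) (ab_cls (commutator G (y [^] j) t))
      = ab_sum [ab_conj (x [^] i \<otimes> y [^] l) (ab_cls (commutator G y t)). l \<leftarrow> [0..<j]]"
    using x y closed commutator_t_in
    by (simp add: ab_cls_commutator_pow_left ab_conj_ab_sum ab_conj_mult_left ab_cls_closed o_def)
  then show ?thesis
    using x y by (simp add: ab_cls_commutator_mult_left ab_cls_commutator_pow_left)
qed

definition triangle_sum :: "'a \<Rightarrow> nat \<Rightarrow> 'a set" where
  "triangle_sum x m = ab_sum [ab_conj (t [^] k \<otimes> x [^] i) (ab_cls (commutator G x t)).
                               k \<leftarrow> [0..<m - 1], i \<leftarrow> [0..<m - 1 - k]]"

lemma triangle_sum_closed: "x \<in> carrier G \<Longrightarrow> triangle_sum x m \<in> carrier R_ab"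
  unfolding triangle_sum_def
  using commutator_t_in by (intro ab_sum_closed) (auto simp: ab_conj_closed ab_cls_closed)

lemma triangle_sum_Suc:
  assumes x: "x \<in> carrier G"
  shows "triangle_sum x (Suc m)
    = ab_sum [ab_conj (x [^] i) (ab_cls (commutator G x t)). i \<leftarrow> [0..<m]]
      \<otimes>\<^bsub>R_ab\<^esub> ab_conj t (triangle_sum x m)"
proof (cases m)
  case 0
  then show ?thesis
    using x by (simp add: triangle_sum_def ab_conj_one)
next
  case (Suc m')
  define f where "f k i = ab_conj (t [^] k \<otimes> x [^] i) (ab_cls (commutator G x t))" for k i :: nat
  have f_closed: "f k i \<in> carrier R_ab" for k i
    unfolding f_def using x commutator_t_in by (simp add: ab_conj_closed ab_cls_closed)
  have "f (Suc k) i = ab_conj t (f k i)" for k i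
    unfolding f_def nat_pow_Suc2 [OF t_closed]
    using x commutator_t_in ab_conj_mult_left [of t "t [^] k \<otimes> x [^] i"]
    by (simp add: m_assoc ab_cls_closed)
  then have f_Suc: "f (Suc k) = ab_conj t \<circ> f k" for k
    by auto
  have f_0: "f 0 = (\<lambda>i. ab_conj (x [^] i) (ab_cls (commutator G x t)))"
    using x by (auto simp: f_def)
  define L where "L = [f k i. k \<leftarrow> [0..<m - 1], i \<leftarrow> [0..<m - 1 - k]]"
  have L_closed: "set L \<subseteq> carrier R_ab"
    using f_closed by (auto simp: L_def)
  have "[f k i. k \<leftarrow> [0..<m], i \<leftarrow> [0..<m - k]] = map (f 0) [0..<m] @ map (ab_conj t) L"
    using Suc by (simp add: L_def upt_conv_Cons map_Suc_upt [symmetric] f_Suc map_concat o_def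
        del: upt_Suc)
  then have "triangle_sum x (Suc m) = ab_sum (map (f 0) [0..<m]) \<otimes>\<^bsub>R_ab\<^esub> ab_sum (map (ab_conj t) L)"
    using f_closed L_closed
    by (auto simp: triangle_sum_def f_def [symmetric] intro!: ab_sum_append ab_conj_closed)
  then show ?thesis
    using L_closed by (simp add: f_0 ab_conj_ab_sum triangle_sum_def f_def L_def)
qed

definition pow_defect :: "'a \<Rightarrow> nat \<Rightarrow> 'a" where
  "pow_defect x m = t [^] m \<otimes> (inv t \<otimes> x) [^] m \<otimes> inv (x [^] m)"

lemma pow_defect_Suc:
  assumes x: "x \<in> carrier G"
  shows "pow_defect x (Suc m) = (t \<otimes> pow_defect x m \<otimes> inv t) \<otimes> inv (commutator G (x [^] m) t)"
  using x unfolding pow_defect_def commutator_def nat_pow_Suc2 [OF t_closed]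
  by (simp add: m_assoc inv_mult_group)

lemma pow_defect_in: "x \<in> carrier G \<Longrightarrow> pow_defect x m \<in> R"
proof (induction m)
  case 0
  then show ?case by (simp add: pow_defect_def)
next
  case (Suc m)
  then show ?case
    by (simp add: pow_defect_Suc inv_op_closed2 commutator_t_in)
qed

lemma ab_cls_pow_defect:
  assumes x: "x \<in> carrier G"
  shows "ab_cls (pow_defect x m) = inv\<^bsub>R_ab\<^esub> triangle_sum x m"
proof (induction m)
  case 0
  then show ?case by (simp add: pow_defect_def triangle_sum_def ab_cls_one)
next
  case (Suc m)
  have "ab_cls (pow_defect x (Suc m))
      = ab_conj t (ab_cls (pow_defect x m)) \<otimes>\<^bsub>R_ab\<^esub> inv\<^bsub>R_ab\<^esub> ab_cls (commutator G (x [^] m) t)"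
    using x pow_defect_in commutator_t_in
    by (simp add: pow_defect_Suc ab_cls_mult ab_cls_inv inv_op_closed2 ab_conj_ab_cls)
  also have "\<dots> = inv\<^bsub>R_ab\<^esub> (ab_cls (commutator G (x [^] m) t) \<otimes>\<^bsub>R_ab\<^esub> ab_conj t (triangle_sum x m))"
    using x Suc triangle_sum_closed commutator_t_in
    by (simp add: ab_conj_inv ab_conj_closed ab_cls_closed R_ab.inv_mult R_ab.m_comm)
  also have "\<dots> = inv\<^bsub>R_ab\<^esub> triangle_sum x (Suc m)"
    using x by (simp add: triangle_sum_Suc ab_cls_commutator_pow_left)
  finally show ?case .
qed

lemma ab_cls_pow_commutator:
  assumes x: "x \<in> carrier G" and y: "y \<in> carrier G" and t: "t = commutator G x y"
    and x_pow: "x [^] (N::nat) \<in> R" and t_pow: "t [^] N \<in> R"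
  shows "ab_cls (t [^] N) = ab_cls (x [^] N) \<otimes>\<^bsub>R_ab\<^esub> inv\<^bsub>R_ab\<^esub> ab_conj y (ab_cls (x [^] N))
    \<otimes>\<^bsub>R_ab\<^esub> inv\<^bsub>R_ab\<^esub> triangle_sum x N"
proof -
  have "y \<otimes> x \<otimes> inv y = inv t \<otimes> x"
    using x y by (simp add: t commutator_def m_assoc inv_mult_group)
  then have "y \<otimes> x [^] N \<otimes> inv y = (inv t \<otimes> x) [^] N"
    using x y by (simp add: conj_nat_pow)
  also have "\<dots> = inv (t [^] N) \<otimes> pow_defect x N \<otimes> x [^] N"
    using x by (simp add: pow_defect_def m_assoc)
  finally have "y \<otimes> x [^] N \<otimes> inv y = inv (t [^] N) \<otimes> pow_defect x N \<otimes> x [^] N" .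
  then have "ab_conj y (ab_cls (x [^] N))
      = inv\<^bsub>R_ab\<^esub> ab_cls (t [^] N) \<otimes>\<^bsub>R_ab\<^esub> inv\<^bsub>R_ab\<^esub> triangle_sum x N \<otimes>\<^bsub>R_ab\<^esub> ab_cls (x [^] N)"
    using x y x_pow t_pow pow_defect_in
    by (simp add: ab_conj_ab_cls ab_cls_mult ab_cls_inv ab_cls_pow_defect)
  then show ?thesis
    using x x_pow t_pow triangle_sum_closed
    by (simp add: ab_cls_closed R_ab.cancel_inv_inv_mult)
qed

end

section \<open>The free group on two generators\<close>

lemma inv_letter_inv_letter [simp]: "inv_letter (inv_letter x) = x"
  by (simp add: inv_letter_def)

lemma reduced_Nil [simp]: "reduced []"
  and reduced_singleton [simp]: "reduced [x]"
  by (simp_all add: reduced_def)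

lemma reduced_Cons_Cons [simp]:
  "reduced (x # y # ys) \<longleftrightarrow> y \<noteq> inv_letter x \<and> reduced (y # ys)"
  unfolding reduced_def by (auto simp: nth_Cons' less_Suc_eq_0_disj)

lemma reduced_ConsD: "reduced (x # xs) \<Longrightarrow> reduced xs"
  by (cases xs) auto

lemma reduced_cancel1: "reduced w \<Longrightarrow> reduced (cancel1 x w)"
  by (cases w) (auto dest: reduced_ConsD simp: inv_letter_def)

lemma cancel1_inv_letter_cancel1: "reduced w \<Longrightarrow> cancel1 (inv_letter x) (cancel1 x w) = w"
  by (cases w; cases "tl w") auto

lemma reduced_foldr_cancel1: "reduced w \<Longrightarrow> reduced (foldr cancel1 u w)"
  by (induction u) (auto intro: reduced_cancel1)

lemma foldr_cancel1_cancel1: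
  assumes "reduced w"
  shows "foldr cancel1 (cancel1 x v) w = cancel1 x (foldr cancel1 v w)"
  using cancel1_inv_letter_cancel1 [OF reduced_foldr_cancel1 [OF assms], of "inv_letter x"]
  by (cases v) auto

lemma foldr_cancel1_assoc:
  "reduced w \<Longrightarrow> foldr cancel1 (foldr cancel1 u v) w = foldr cancel1 u (foldr cancel1 v w)"
  by (induction u) (auto simp: foldr_cancel1_cancel1 reduced_foldr_cancel1)

lemma foldr_cancel1_Nil: "reduced u \<Longrightarrow> foldr cancel1 u [] = u"
  by (induction u rule: induct_list012) auto

lemma foldr_cancel1_inverse_word: "foldr cancel1 (rev (map inv_letter u)) u = []"
  by (induction u) auto

lemma F2_carrier: "carrier F2 = {w. reduced w}"
  and F2_mult: "u \<otimes>\<^bsub>F2\<^esub> v = foldr cancel1 u v"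
  and F2_one: "\<one>\<^bsub>F2\<^esub> = []"
  by (simp_all add: F2_def)

lemma group_F2: "group F2"
proof (rule groupI)
  fix u assume "u \<in> carrier F2"
  then show "\<exists>v\<in>carrier F2. v \<otimes>\<^bsub>F2\<^esub> u = \<one>\<^bsub>F2\<^esub>"
    by (intro bexI [of _ "foldr cancel1 (rev (map inv_letter u)) []"])
      (simp_all add: F2_carrier F2_mult F2_one reduced_foldr_cancel1 foldr_cancel1_assoc
         foldr_cancel1_inverse_word)
qed (auto simp: F2_carrier F2_mult F2_one reduced_foldr_cancel1 foldr_cancel1_assoc foldr_cancel1_Nil)

section \<open>The Heisenberg group over \<open>\<int>/n\<int>\<close>\<close>

lemma Heis_mult [simp]:
  "(x, y, z) \<otimes>\<^bsub>Heis n\<^esub> (x', y', z') = ((x + x') mod n, (y + y') mod n, (z + z' + x * y') mod n)"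
  by (simp add: Heis_def)

lemma Heis_one: "\<one>\<^bsub>Heis n\<^esub> = (0, 0, 0)"
  by (simp add: Heis_def)

lemma Heis_carrier_iff [simp]:
  "(x, y, z) \<in> carrier (Heis n) \<longleftrightarrow> 0 \<le> x \<and> x < n \<and> 0 \<le> y \<and> y < n \<and> 0 \<le> z \<and> z < n"
  by (auto simp: Heis_def)

lemma group_Heis:
  assumes n: "n > 0"
  shows "group (Heis n)"
proof (rule groupI)
  fix u v assume "u \<in> carrier (Heis n)" "v \<in> carrier (Heis n)"
  then show "u \<otimes>\<^bsub>Heis n\<^esub> v \<in> carrier (Heis n)"
    using n by (cases u; cases v) auto
next
  fix u v w assume "u \<in> carrier (Heis n)" "v \<in> carrier (Heis n)" "w \<in> carrier (Heis n)"
  obtain x y z x' y' z' x'' y'' z'' where uvw: "u = (x, y, z)" "v = (x', y', z')" "w = (x'', y'', z'')"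
    by (cases u; cases v; cases w) auto
  have "((z + z' + x * y') mod n + z'' + (x + x') mod n * y'') mod n
      = (z + z' + x * y' + z'' + (x + x') * y'') mod n"
    by (intro mod_add_cong mod_mult_cong) simp_all
  moreover have "(z + (z' + z'' + x' * y'') mod n + x * ((y' + y'') mod n)) mod n
      = (z + (z' + z'' + x' * y'') + x * (y' + y'')) mod n"
    by (intro mod_add_cong mod_mult_cong) simp_all
  ultimately show "u \<otimes>\<^bsub>Heis n\<^esub> v \<otimes>\<^bsub>Heis n\<^esub> w = u \<otimes>\<^bsub>Heis n\<^esub> (v \<otimes>\<^bsub>Heis n\<^esub> w)"
    by (simp add: uvw mod_simps algebra_simps)
next
  fix u assume "u \<in> carrier (Heis n)"
  then obtain x y z where u: "u = (x, y, z)" and range: "0 \<le> x" "x < n" "0 \<le> y" "y < n" "0 \<le> z" "z < n"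
    by (cases u) auto
  show "\<one>\<^bsub>Heis n\<^esub> \<otimes>\<^bsub>Heis n\<^esub> u = u"
    using range by (simp add: u Heis_one)
  have "((x * y - z) mod n + z + (- x) mod n * y) mod n = (x * y - z + z + (- x) * y) mod n"
    by (intro mod_add_cong mod_mult_cong) simp_all
  then have "((- x) mod n, (- y) mod n, (x * y - z) mod n) \<otimes>\<^bsub>Heis n\<^esub> u = \<one>\<^bsub>Heis n\<^esub>"
    by (simp add: u Heis_one mod_simps)
  then show "\<exists>v\<in>carrier (Heis n). v \<otimes>\<^bsub>Heis n\<^esub> u = \<one>\<^bsub>Heis n\<^esub>"
    using n by (intro bexI) auto
qed (simp add: Heis_one n)

lemma hval_Nil [simp]: "hval n [] = (0, 0, 0)"
  by (simp add: hval_def Heis_one)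

lemma hval_Cons [simp]: "hval n (l # w) = letter_val n l \<otimes>\<^bsub>Heis n\<^esub> hval n w"
  by (simp add: hval_def)

lemma letter_val_closed: "n > 0 \<Longrightarrow> letter_val n l \<in> carrier (Heis n)"
  by (simp add: letter_val_def)

lemma hval_closed: "n > 0 \<Longrightarrow> hval n w \<in> carrier (Heis n)"
  using monoid.m_closed [OF group.is_monoid [OF group_Heis]] letter_val_closed
  by (induction w) simp_all

lemma letter_val_inv_letter:
  "n > 0 \<Longrightarrow> letter_val n l \<otimes>\<^bsub>Heis n\<^esub> letter_val n (inv_letter l) = \<one>\<^bsub>Heis n\<^esub>"
  by (cases l) (auto simp: letter_val_def inv_letter_def Heis_one mod_simps)

lemma hval_cancel1:
  assumes n: "n > 0"
  shows "hval n (cancel1 l w) = letter_val n l \<otimes>\<^bsub>Heis n\<^esub> hval n w"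
proof (cases w)
  case (Cons l' w')
  interpret H: group "Heis n" using group_Heis [OF n] .
  have "l' = inv_letter l \<Longrightarrow> hval n w' = letter_val n l \<otimes>\<^bsub>Heis n\<^esub> hval n w"
    using n by (simp add: Cons H.m_assoc [symmetric] letter_val_inv_letter letter_val_closed hval_closed)
  then show ?thesis by (simp add: Cons)
qed simp

lemma group_hom_hval:
  assumes n: "n > 0"
  shows "group_hom F2 (Heis n) (hval n)"
proof -
  interpret H: group "Heis n" using group_Heis [OF n] .
  have "hval n (foldr cancel1 u v) = hval n u \<otimes>\<^bsub>Heis n\<^esub> hval n v" for u v
    using n by (induction u) (simp_all add: hval_cancel1 hval_closed letter_val_closed H.m_assoc flip: Heis_one)
  then have "hval n \<in> hom F2 (Heis n)"
    using n by (intro homI) (simp_all add: hval_closed F2_mult)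
  then show ?thesis
    by (simp add: group_hom_def group_hom_axioms_def group_F2 H.group_axioms)
qed

lemma Rel_normal: "n > 0 \<Longrightarrow> Rel n \<lhd> F2"
  unfolding Rel_def by (rule group_hom.normal_kernel [OF group_hom_hval])

lemma comm_eq_commutator: "comm = commutator F2"
  by (simp add: fun_eq_iff comm_def commutator_def)

interpretation F2: group F2
  by (rule group_F2)

lemma gen_a_closed [simp]: "gen_a \<in> carrier F2"
  and gen_b_closed [simp]: "gen_b \<in> carrier F2"
  by (simp_all add: gen_a_def gen_b_def F2_carrier)

lemma gen_T_closed [simp]: "gen_T \<in> carrier F2"
  by (simp add: gen_T_def comm_eq_commutator)

lemma inv_gen_T: "inv\<^bsub>F2\<^esub> gen_T = commutator F2 gen_b gen_a"
  by (simp add: gen_T_def comm_def commutator_def F2.m_assoc F2.inv_mult_group)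

lemma Rel_iff: "x \<in> Rel n \<longleftrightarrow> x \<in> carrier F2 \<and> hval n x = (0, 0, 0)"
  by (simp add: Rel_def kernel_def Heis_one)

context
  fixes n :: int
  assumes two_le_n: "2 \<le> n"
begin

interpretation H: group "Heis n"
  using group_Heis two_le_n by simp

interpretation hval: group_hom F2 "Heis n" "hval n"
  using group_hom_hval two_le_n by simp

lemma hval_gen_a: "hval n gen_a = (1, 0, 0)"
  and hval_gen_b: "hval n gen_b = (0, 1, 0)"
  using two_le_n by (simp_all add: gen_a_def gen_b_def letter_val_def)

lemma hval_gen_T: "hval n gen_T = (0, 0, 1)"
proof -
  have inv: "inv\<^bsub>Heis n\<^esub> (1, 0, 0) = (n - 1, 0, 0)" "inv\<^bsub>Heis n\<^esub> (0, 1, 0) = (0, n - 1, 0)"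
    using two_le_n by (auto intro!: H.inv_equality simp: Heis_one)
  have "((n - 1) * (n - 1)) mod n = (1 + (n - 2) * n) mod n"
    by (simp add: algebra_simps)
  then have "((n - 1) * (n - 1)) mod n = 1"
    using two_le_n by simp
  then show ?thesis
    using two_le_n inv
    by (simp add: gen_T_def comm_eq_commutator hval.hom_commutator hval_gen_a hval_gen_b commutator_def)
qed

lemma Heis_pow_generators:
  "(1, 0, 0) [^]\<^bsub>Heis n\<^esub> (k::nat) = (int k mod n, 0, 0)"
  "(0, 1, 0) [^]\<^bsub>Heis n\<^esub> (k::nat) = (0, int k mod n, 0)"
  "(0, 0, 1) [^]\<^bsub>Heis n\<^esub> (k::nat) = (0, 0, int k mod n)"
  by (induction k) (auto simp: Heis_one mod_add_right_eq add.commute)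

lemma gen_pow_n_in_Rel:
  "gen_a [^]\<^bsub>F2\<^esub> nat n \<in> Rel n"
  "gen_b [^]\<^bsub>F2\<^esub> nat n \<in> Rel n"
  "gen_T [^]\<^bsub>F2\<^esub> nat n \<in> Rel n"
  using two_le_n
  by (simp_all add: Rel_iff hval.hom_nat_pow hval_gen_a hval_gen_b hval_gen_T Heis_pow_generators
      del: pow_nat)

lemma commutator_gen_T_in_Rel:
  assumes g: "g \<in> carrier F2"
  shows "commutator F2 g gen_T \<in> Rel n"
proof -
  obtain x y z where "hval n g = (x, y, z)"
    by (cases "hval n g")
  then have "hval n g \<otimes>\<^bsub>Heis n\<^esub> (0, 0, 1) = (0, 0, 1) \<otimes>\<^bsub>Heis n\<^esub> hval n g"
    by (simp add: algebra_simps)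
  then show ?thesis
    using g two_le_n
    by (simp add: Rel_iff hval.hom_commutator hval_gen_T H.commutator_eq_one Heis_one)
qed

lemma central_mod_gen_T: "central_mod (Rel n) F2 gen_T"
  using Rel_normal two_le_n commutator_gen_T_in_Rel
  by (simp add: central_mod_def central_mod_axioms_def normal_abelianization_def)

end

theorem lemma2p11:
  fixes n :: int
  assumes "n \<ge> 2"
  shows "fpow gen_T n \<in> Rel n
    \<and> (\<forall>i j :: nat. fpow gen_T (-n) \<otimes>\<^bsub>F2\<^esub> comm (fpow gen_a (int i) \<otimes>\<^bsub>F2\<^esub> fpow gen_b (int j)) gen_T \<in> Rel n)
    \<and> cls n (fpow gen_T n) =
        cls n (fpow gen_a n)
        \<otimes>\<^bsub>Rab n\<^esub> inv\<^bsub>Rab n\<^esub> (act n gen_b (fpow gen_a n))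
        \<otimes>\<^bsub>Rab n\<^esub> inv\<^bsub>Rab n\<^esub> (rsum n [act n (fpow gen_T (int k) \<otimes>\<^bsub>F2\<^esub> fpow gen_a (int i)) (comm gen_a gen_T).
                                      k \<leftarrow> [0..<nat n - 1], i \<leftarrow> [0..<nat n - 1 - k]])
    \<and> cls n (fpow gen_T (-n)) =
        cls n (fpow gen_b n)
        \<otimes>\<^bsub>Rab n\<^esub> inv\<^bsub>Rab n\<^esub> (act n gen_a (fpow gen_b n))
        \<otimes>\<^bsub>Rab n\<^esub> inv\<^bsub>Rab n\<^esub> (rsum n [act n (fpow gen_T (- int k) \<otimes>\<^bsub>F2\<^esub> fpow gen_b (int j)) (comm gen_b (fpow gen_T (-1))).
                                      k \<leftarrow> [0..<nat n - 1], j \<leftarrow> [0..<nat n - 1 - k]])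
    \<and> (\<forall>i j :: nat. cls n (comm (fpow gen_a (int i) \<otimes>\<^bsub>F2\<^esub> fpow gen_b (int j)) gen_T) =
        rsum n [act n (fpow gen_a (int i) \<otimes>\<^bsub>F2\<^esub> fpow gen_b (int l)) (comm gen_b gen_T). l \<leftarrow> [0..<j]]
        \<otimes>\<^bsub>Rab n\<^esub> rsum n [act n (fpow gen_a (int l)) (comm gen_a gen_T). l \<leftarrow> [0..<i]])"
proof -
  interpret T: central_mod "Rel n" F2 gen_T
    using central_mod_gen_T assms .
  interpret T_inv: central_mod "Rel n" F2 "inv\<^bsub>F2\<^esub> gen_T"
    by (rule T.central_mod_inv)
  define N where "N = nat n"
  have n: "n = int N"
    using assms by (simp add: N_def)
  have abelianization_eqs: "cls n = T.ab_cls" "Rab n = T.R_ab" "rsum n = T.ab_sum" "comm = commutator F2"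
    by (simp_all add: fun_eq_iff cls_def T.ab_cls_def Rab_def T.R_ab_def rsum_def T.ab_sum_def
        comm_eq_commutator)
  have act_eq: "act n g x = T.ab_conj g (T.ab_cls x)" if "g \<in> carrier F2" "x \<in> carrier F2" for g x
    using that by (simp add: act_def abelianization_eqs T.ab_conj_ab_cls)
  have fpow_eqs: "fpow x (int k) = x [^]\<^bsub>F2\<^esub> k" "fpow gen_T (- int k) = inv\<^bsub>F2\<^esub> gen_T [^]\<^bsub>F2\<^esub> k"
    "fpow x n = x [^]\<^bsub>F2\<^esub> N" "fpow gen_T (- n) = inv\<^bsub>F2\<^esub> gen_T [^]\<^bsub>F2\<^esub> N"
    "fpow gen_T (-1) = inv\<^bsub>F2\<^esub> gen_T" for x and k :: nat
    by (simp_all add: n int_pow_int F2.int_pow_neg_int F2.nat_pow_inv F2.int_pow_neg)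
  have in_Rel: "gen_a [^]\<^bsub>F2\<^esub> N \<in> Rel n" "gen_b [^]\<^bsub>F2\<^esub> N \<in> Rel n"
    "gen_T [^]\<^bsub>F2\<^esub> N \<in> Rel n" "inv\<^bsub>F2\<^esub> gen_T [^]\<^bsub>F2\<^esub> N \<in> Rel n"
    using gen_pow_n_in_Rel [OF assms] T.m_inv_closed by (simp_all add: N_def F2.nat_pow_inv)
  show ?thesis
    using in_Rel subgroup.m_closed [OF T.subgroup_axioms in_Rel(4) T.commutator_t_in]
      T.ab_cls_pow_commutator [OF gen_a_closed gen_b_closed gen_T_def [unfolded abelianization_eqs]]
      T_inv.ab_cls_pow_commutator [OF gen_b_closed gen_a_closed inv_gen_T]
      T.ab_cls_commutator_pow_mult_pow_left [OF gen_a_closed gen_b_closed]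
    by (simp add: N_def [symmetric] fpow_eqs abelianization_eqs act_eq T.triangle_sum_def T_inv.triangle_sum_def)
qed

end
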